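(* Let $\mathcal{M}=(\Sigma,\Gamma,\mathcal{H},U,M)$ be a QMM, let $n=\dim\mathcal{H}$, and let $\rho_s,\rho_t$ be density operators on $\mathcal{H}$. Then: (1) $\rho_s\sim\rho_t \iff \rho_s\sim^{n^2-1}\rho_t \iff \rho_s\sim_{n^2-1}\rho_t$; (2) for every $k\in\mathbb{N}$, $\rho_s\sim_k\rho_t \iff \rho_s\sim_k^{n^2-1}\rho_t$.
   Context: A quantum Mealy machine (QMM) is a tuple $\mathcal{M}=(\Sigma,\Gamma,\mathcal{H},U,M)$ where $\Sigma$ (inputs) and $\Gamma$ (outputs) are finite alphabets, $\mathcal{H}$ is a finite-dimensional complex Hilbert space, $U=\{U_\sigma:\sigma\in\Sigma\}$ is a family of unitary operators on $\mathcal{H}$, and $M=\{M_\gamma:\gamma\in\Gamma\}$ is a family of linear operators on $\mathcal{H}$ with $\sum_{\gamma}M_\gamma^\dagger M_\gamma=I$. For a word $a$, $|a|$ is its length, $a[i]$ its $i$-th letter (1-indexed), $a[l:r]=a[l]\cdots a[r]$ (empty word $\epsilon$ if $l>r$), and $U_a=U_{a[|a|]}\cdots U_{a[1]}$, $U_\epsilon=I$. A scheduler for $a\in\Sigma^*$ is a finite non-decreasing sequence $\mathcal{S}=(s_1\le\dots\le s_{|\mathcal{S}|})$ of integers with $0\le s_1$ and $s_{|\mathcal{S}|}\le|a|$ (possibly empty). With $s_0=0$, $s_{|\mathcal{S}|+1}=|a|$, set $a_i=a[s_{i-1}+1:s_i]$ for $1\le i\le|\mathcal{S}|+1$. For $b=b_1\cdots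 b_{|\mathcal{S}|}\in\Gamma^{|\mathcal{S}|}$ let $V_{b|a,\mathcal{S}}=U_{a_{|\mathcal{S}|+1}}M_{b_{|\mathcal{S}|}}U_{a_{|\mathcal{S}|}}\cdots M_{b_1}U_{a_1}$, and for an operator $\rho$ let $\rho^{\mathcal{M}}_{b|a,\mathcal{S}}=V_{b|a,\mathcal{S}}\rho V_{b|a,\mathcal{S}}^\dagger$. For a density operator $\rho$, $\Pr^{\mathcal{M}}_\rho(b|a,\mathcal{S})=\operatorname{tr}(\rho^{\mathcal{M}}_{b|a,\mathcal{S}})$. Two density operators $\rho_s,\rho_t$ are: equivalent ($\rho_s\sim\rho_t$) if $\Pr^{\mathcal{M}}_{\rho_s}(b|a,\mathcal{S})=\Pr^{\mathcal{M}}_{\rho_t}(b|a,\mathcal{S})$ for all $a\in\Sigma^*$, schedulers $\mathcal{S}$ for $a$ and $b\in\Gamma^{|\mathcal{S}|}$; equivalent up to $k$ measurements ($\rho_s\sim_k\rho_t$) if this holds for all such triples with $|\mathcal{S}|\le k$; $m$-equivalent ($\rho_s\sim^m\rho_t$) if it holds for all triples with $|a|+|\mathcal{S}|\le m$; and $m$-equivalent up to $k$ measurements ($\rho_s\sim^m_k\rho_t$) if it holds for all triples with $|\mathcal{S}|\le k$ and $|a|+|\mathcal{S}|\le m$. *)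

theory Defs
  imports "HOL-Analysis.Analysis"
begin

text \<open>Operators on an n-dimensional complex Hilbert space H = complex^'n are
  represented as matrices complex^'n^'n, where n = CARD('n).\<close>

type_synonym 'n op = "complex^'n^'n"

definition cadj :: "'n::finite op \<Rightarrow> 'n op" where
  "cadj A = (\<chi> i j. cnj (A $ j $ i))"

definition mtrace :: "'n::finite op \<Rightarrow> complex" where
  "mtrace A = (\<Sum>i\<in>UNIV. A $ i $ i)"

definition unitary_op :: "'n::finite op \<Rightarrow> bool" where
  "unitary_op A \<longleftrightarrow> cadj A ** A = mat 1 \<and> A ** cadj A = mat 1"

definition cinner :: "complex^'n::finite \<Rightarrow> complex^'n \<Rightarrow> complex" where
  "cinner x y = (\<Sum>i\<in>UNIV. cnj (x $ i) * y $ i)"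

definition density_op :: "'n::finite op \<Rightarrow> bool" where
  "density_op \<rho> \<longleftrightarrow> cadj \<rho> = \<rho> \<and> (\<forall>x. 0 \<le> Re (cinner x (\<rho> *v x)) \<and> Im (cinner x (\<rho> *v x)) = 0)
     \<and> mtrace \<rho> = 1"

definition qmm :: "('i::finite \<Rightarrow> 'n::finite op) \<Rightarrow> ('o::finite \<Rightarrow> 'n op) \<Rightarrow> bool" where
  "qmm U M \<longleftrightarrow> (\<forall>\<sigma>. unitary_op (U \<sigma>)) \<and> (\<Sum>\<gamma>\<in>UNIV. cadj (M \<gamma>) ** M \<gamma>) = mat 1"

text \<open>U_w = U_{w[|w|]} ... U_{w[1]}, U_eps = I.\<close>
definition Uword :: "('i \<Rightarrow> 'n::finite op) \<Rightarrow> 'i list \<Rightarrow> 'n op" where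
  "Uword U w = foldl (\<lambda>A \<sigma>. U \<sigma> ** A) (mat 1) w"

definition scheduler :: "'i list \<Rightarrow> nat list \<Rightarrow> bool" where
  "scheduler a S \<longleftrightarrow> sorted S \<and> (\<forall>s\<in>set S. s \<le> length a)"

text \<open>Vop U M a S b p: the operator for the remaining segments, where p is the
  previous cut point s_{i-1}; segments a_i = a[s_{i-1}+1 : s_i].
  V_{b|a,S} = Vop U M a S b 0 (for length b = length S).\<close>
fun Vop :: "('i \<Rightarrow> 'n::finite op) \<Rightarrow> ('o \<Rightarrow> 'n op) \<Rightarrow> 'i list \<Rightarrow> nat list \<Rightarrow> 'o list \<Rightarrow> nat \<Rightarrow> 'n op" where
  "Vop U M a [] [] p = Uword U (drop p a)"
| "Vop U M a (s # S) (g # b) p = Vop U M a S b s ** M g ** Uword U (drop p (take s a))"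
| "Vop U M a _ _ p = 0"

definition Vmap :: "('i \<Rightarrow> 'n::finite op) \<Rightarrow> ('o \<Rightarrow> 'n op) \<Rightarrow> 'i list \<Rightarrow> nat list \<Rightarrow> 'o list \<Rightarrow> 'n op" where
  "Vmap U M a S b = Vop U M a S b 0"

definition Prob :: "('i \<Rightarrow> 'n::finite op) \<Rightarrow> ('o \<Rightarrow> 'n op) \<Rightarrow> 'n op \<Rightarrow> 'o list \<Rightarrow> 'i list \<Rightarrow> nat list \<Rightarrow> complex" where
  "Prob U M \<rho> b a S = mtrace (Vmap U M a S b ** \<rho> ** cadj (Vmap U M a S b))"

definition equiv_on :: "('i \<Rightarrow> 'n::finite op) \<Rightarrow> ('o \<Rightarrow> 'n op) \<Rightarrow> ('i list \<Rightarrow> nat list \<Rightarrow> bool) \<Rightarrow> 'n op \<Rightarrow> 'n op \<Rightarrow> bool" where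
  "equiv_on U M P \<rho>s \<rho>t \<longleftrightarrow> (\<forall>a S b. scheduler a S \<longrightarrow> length b = length S \<longrightarrow> P a S \<longrightarrow>
      Prob U M \<rho>s b a S = Prob U M \<rho>t b a S)"

definition qequiv where "qequiv U M = equiv_on U M (\<lambda>a S. True)"
definition qequiv_k where "qequiv_k U M k = equiv_on U M (\<lambda>a S. length S \<le> k)"
definition qequiv_m where "qequiv_m U M m = equiv_on U M (\<lambda>a S. length a + length S \<le> m)"
definition qequiv_mk where "qequiv_mk U M m k =
  equiv_on U M (\<lambda>a S. length S \<le> k \<and> length a + length S \<le> m)"

end

theory Submission
  imports Defs
begin

text \<open>By cyclicity of the trace, \<open>Pr(b|a,S)\<close> equals \<open>tr(E \<rho>)\<close> for the effect \<open>E = V\<^sup>\<dagger>V\<close>,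
  so two states are equivalent on a class of triples iff the real span of the corresponding
  effects lies in the real subspace \<open>{E. tr(E \<rho>\<^sub>s) = tr(E \<rho>\<^sub>t)}\<close>. Effects of length \<open>l + 1\<close>
  arise from those of length \<open>l\<close> by conjugation with some \<open>U\<^sub>\<sigma>\<close> or, spending one measurement,
  some \<open>M\<^sub>\<gamma>\<close>. Hence once the span for \<open>k\<close> measurements and length \<open>l\<close> equals that for length
  \<open>l + 1\<close>, and the span for \<open>k - 1\<close> measurements has already stabilised, it stays constant.
  By induction on \<open>k\<close>, the span stabilises at a length \<open>\<tau>\<close> with \<open>\<tau> + 1 \<le>\<close> its dimension,
  and as all effects are Hermitian this dimension is at most \<open>n\<^sup>2\<close>.\<close>

lemma cadj_mult: "cadj (A ** B) = cadj B ** cadj (A::'n::finite op)"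
  by (simp add: cadj_def matrix_matrix_mult_def vec_eq_iff mult.commute)

lemma cadj_mat_1: "cadj (mat 1 :: 'n::finite op) = mat 1"
  by (simp add: cadj_def mat_def vec_eq_iff)

lemma cadj_cadj: "cadj (cadj A) = (A::'n::finite op)"
  by (simp add: cadj_def vec_eq_iff)

lemma mtrace_mult_commute: "mtrace (A ** B) = mtrace (B ** (A::'n::finite op))"
  unfolding mtrace_def matrix_matrix_mult_def
  by (simp, subst sum.swap, simp add: mult.commute)

lemma matrix_mult_scaleR_left: "(r *\<^sub>R X) ** A = r *\<^sub>R (X ** (A::'n::finite op))"
  by (simp add: matrix_matrix_mult_def vec_eq_iff scaleR_sum_right)

lemma matrix_mult_scaleR_right: "A ** (r *\<^sub>R X) = r *\<^sub>R (A ** (X::'n::finite op))"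
  by (simp add: matrix_matrix_mult_def vec_eq_iff scaleR_sum_right)

lemma Uword_foldl: "foldl (\<lambda>A \<sigma>. U \<sigma> ** A) B w = Uword U w ** (B::'n::finite op)"
proof (induction w arbitrary: B)
  case Nil
  then show ?case by (simp add: Uword_def)
next
  case (Cons x w)
  have "Uword U (x # w) = Uword U w ** U x"
    using Cons.IH[of "U x ** mat 1"] by (simp add: Uword_def)
  then show ?case
    using Cons.IH[of "U x ** B"] by (simp add: matrix_mul_assoc)
qed

lemma Uword_Cons: "Uword U (x # w) = Uword U w ** (U x :: 'n::finite op)"
  using Uword_foldl[of U "U x ** mat 1" w] by (simp add: Uword_def)

lemma Vop_map_Suc: "Vop U M (\<sigma> # a) (map Suc S) b (Suc p) = Vop U M a S b p"
  by (induction S arbitrary: b p) (case_tac b; simp)+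

lemma Vmap_Cons: "Vmap U M (\<sigma> # a) (map Suc S) b = Vmap U M a S b ** U \<sigma>"
  by (cases S; cases b)
    (simp_all add: Vmap_def Uword_Cons Vop_map_Suc matrix_mul_assoc)

lemma Vmap_0_Cons: "Vmap U M a (0 # S) (g # b) = Vmap U M a S b ** M g"
  by (simp add: Vmap_def Uword_def)

lemma scheduler_map_Suc: "scheduler (\<sigma> # a) (map Suc S) \<longleftrightarrow> scheduler a S"
  by (simp add: scheduler_def sorted_map)

lemma scheduler_0_Cons: "scheduler a (0 # S) \<longleftrightarrow> scheduler a S"
  by (simp add: scheduler_def)

lemma scheduler_cases:
  assumes "scheduler a S" "length b = length S"
  obtains "a = []" "S = []" "b = []"
  | S' g b' where "S = 0 # S'" "b = g # b'"
  | \<sigma> a' S' where "a = \<sigma> # a'" "S = map Suc S'"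
proof (cases S)
  case Nil
  then show ?thesis using assms that(1) that(3)[of _ _ "[]"] by (cases a) auto
next
  case (Cons s S'')
  show ?thesis
  proof (cases s)
    case 0
    then show ?thesis using assms Cons that(2) by (cases b) auto
  next
    case (Suc s')
    have "\<forall>x\<in>set S. 1 \<le> x" using assms(1) Cons Suc by (auto simp: scheduler_def)
    then have "S = map Suc (map (\<lambda>x. x - 1) S)" by (induction S) auto
    moreover obtain \<sigma> a' where "a = \<sigma> # a'"
      using assms(1) Cons Suc by (cases a) (auto simp: scheduler_def)
    ultimately show ?thesis using that(3) by blast
  qed
qed

subsection \<open>Effects and their one-step recursion\<close>

definition effect :: "('i \<Rightarrow> 'n::finite op) \<Rightarrow> ('o \<Rightarrow> 'n op) \<Rightarrow> 'i list \<Rightarrow> nat list \<Rightarrow> 'o list \<Rightarrow> 'n op"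
  where "effect U M a S b = cadj (Vmap U M a S b) ** Vmap U M a S b"

definition effects :: "('i \<Rightarrow> 'n::finite op) \<Rightarrow> ('o \<Rightarrow> 'n op) \<Rightarrow> nat \<Rightarrow> nat \<Rightarrow> 'n op set"
  where "effects U M k m = {effect U M a S b | a S b. scheduler a S \<and> length b = length S
      \<and> length S \<le> k \<and> length a + length S \<le> m}"

definition sandwich :: "'n::finite op \<Rightarrow> 'n op \<Rightarrow> 'n op"
  where "sandwich A X = cadj A ** X ** A"

definition effects_step :: "('i \<Rightarrow> 'n::finite op) \<Rightarrow> ('o \<Rightarrow> 'n op) \<Rightarrow> nat \<Rightarrow> 'n op set \<Rightarrow> 'n op set \<Rightarrow> 'n op set"
  where "effects_step U M k A B = insert (mat 1)
    ((\<Union>\<sigma>. sandwich (U \<sigma>) ` A) \<union> (if k = 0 then {} else \<Union>g. sandwich (M g) ` B))"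

lemma effect_Nil: "effect U M [] [] [] = mat 1"
  by (simp add: effect_def Vmap_def Uword_def cadj_mat_1)

lemma effect_Cons: "effect U M (\<sigma> # a) (map Suc S) b = sandwich (U \<sigma>) (effect U M a S b)"
  by (simp add: effect_def sandwich_def Vmap_Cons cadj_mult matrix_mul_assoc)

lemma effect_0_Cons: "effect U M a (0 # S) (g # b) = sandwich (M g) (effect U M a S b)"
  by (simp add: effect_def sandwich_def Vmap_0_Cons cadj_mult matrix_mul_assoc)

lemma effect_hermitian: "cadj (effect U M a S b) = effect U M a S b"
  by (simp add: effect_def cadj_mult cadj_cadj)

lemma mat_1_in_effects: "mat 1 \<in> effects U M k m"
proof -
  have "mat 1 = effect U M [] [] [] \<and> scheduler [] [] \<and> length [] = length []
      \<and> length [] \<le> k \<and> length [] + length [] \<le> m"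
    by (simp add: effect_Nil scheduler_def)
  then show ?thesis unfolding effects_def by blast
qed

lemma effects_mono: "k \<le> k' \<Longrightarrow> m \<le> m' \<Longrightarrow> effects U M k m \<subseteq> effects U M k' m'"
  unfolding effects_def by (fastforce intro: le_trans)

lemma effects_subset_effects_diag: "effects U M k m \<subseteq> effects U M m m"
  unfolding effects_def by fastforce

lemma effects_Suc: "effects U M k (Suc m) = effects_step U M k (effects U M k m) (effects U M (k - 1) m)"
proof
  show "effects U M k (Suc m) \<subseteq> effects_step U M k (effects U M k m) (effects U M (k - 1) m)"
  proof
    fix E assume "E \<in> effects U M k (Suc m)"
    then obtain a S b where E: "E = effect U M a S b" and h: "scheduler a S" "length b = length S"
      "length S \<le> k" "length a + length S \<le> Suc m" by (auto simp: effects_def)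
    from h(1,2) show "E \<in> effects_step U M k (effects U M k m) (effects U M (k - 1) m)"
    proof (cases rule: scheduler_cases)
      case 1
      then show ?thesis using E by (simp add: effects_step_def effect_Nil)
    next
      case (2 S' g b')
      have "effect U M a S' b' \<in> effects U M (k - 1) m"
        using h 2 scheduler_0_Cons unfolding effects_def by fastforce
      then show ?thesis using E 2 h(3) by (auto simp: effects_step_def effect_0_Cons)
    next
      case (3 \<sigma> a' S')
      have "effect U M a' S' b \<in> effects U M k m"
        using h 3 scheduler_map_Suc unfolding effects_def by fastforce
      then show ?thesis using E 3 by (auto simp: effects_step_def effect_Cons)
    qed
  qed
next
  show "effects_step U M k (effects U M k m) (effects U M (k - 1) m) \<subseteq> effects U M k (Suc m)"
  proof
    fix E assume "E \<in> effects_step U M k (effects U M k m) (effects U M (k - 1) m)"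
    then consider "E = mat 1"
      | \<sigma> X where "X \<in> effects U M k m" "E = sandwich (U \<sigma>) X"
      | g X where "k \<noteq> 0" "X \<in> effects U M (k - 1) m" "E = sandwich (M g) X"
      by (auto simp: effects_step_def split: if_splits)
    then show "E \<in> effects U M k (Suc m)"
    proof cases
      case 1
      then show ?thesis by (simp add: mat_1_in_effects)
    next
      case (2 \<sigma> X)
      then obtain a S b where "X = effect U M a S b" "scheduler a S" "length b = length S"
        "length S \<le> k" "length a + length S \<le> m" by (auto simp: effects_def)
      then have "E = effect U M (\<sigma> # a) (map Suc S) b \<and> scheduler (\<sigma> # a) (map Suc S)
          \<and> length b = length (map Suc S) \<and> length (map Suc S) \<le> k
          \<and> length (\<sigma> # a) + length (map Suc S) \<le> Suc m"
        using 2 by (simp add: effect_Cons scheduler_map_Suc)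
      then show ?thesis unfolding effects_def by blast
    next
      case (3 g X)
      then obtain a S b where "X = effect U M a S b" "scheduler a S" "length b = length S"
        "length S \<le> k - 1" "length a + length S \<le> m" by (auto simp: effects_def)
      then have "E = effect U M a (0 # S) (g # b) \<and> scheduler a (0 # S)
          \<and> length (g # b) = length (0 # S) \<and> length (0 # S) \<le> k
          \<and> length a + length (0 # S) \<le> Suc m"
        using 3 by (simp add: effect_0_Cons scheduler_0_Cons)
      then show ?thesis unfolding effects_def by blast
    qed
  qed
qed

lemma linear_sandwich: "linear (sandwich (A::'n::finite op))"
proof (rule linearI)
  fix X Y :: "'n op"
  show "sandwich A (X + Y) = sandwich A X + sandwich A Y"
    by (simp add: sandwich_def matrix_matrix_mult_def vec_eq_iff algebra_simps sum.distrib)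
next
  fix r :: real and X :: "'n op"
  show "sandwich A (r *\<^sub>R X) = r *\<^sub>R sandwich A X"
    by (simp add: sandwich_def matrix_mult_scaleR_left matrix_mult_scaleR_right)
qed

lemma effects_step_mono: "A \<subseteq> A' \<Longrightarrow> B \<subseteq> B' \<Longrightarrow> effects_step U M k A B \<subseteq> effects_step U M k A' B'"
  unfolding effects_step_def by (cases "k = 0") (simp_all, blast+)

lemma span_effects_step_span:
  "span (effects_step U M k (span A) (span B)) = span (effects_step U M k A B)"
proof
  show "span (effects_step U M k A B) \<subseteq> span (effects_step U M k (span A) (span B))"
    by (intro span_mono effects_step_mono span_superset)
next
  have sandwich_span: "sandwich C X \<in> span (sandwich C ` Y)" if "X \<in> span Y" for C X Y
    using that by (simp add: span_linear_image[OF linear_sandwich])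
  have "effects_step U M k (span A) (span B) \<subseteq> span (effects_step U M k A B)"
  proof
    fix E assume "E \<in> effects_step U M k (span A) (span B)"
    then consider "E = mat 1"
      | \<sigma> X where "X \<in> span A" "E = sandwich (U \<sigma>) X"
      | g X where "k \<noteq> 0" "X \<in> span B" "E = sandwich (M g) X"
      by (auto simp: effects_step_def split: if_splits)
    then show "E \<in> span (effects_step U M k A B)"
    proof cases
      case 1
      then show ?thesis by (simp add: effects_step_def span_base)
    next
      case (2 \<sigma> X)
      have "sandwich (U \<sigma>) ` A \<subseteq> effects_step U M k A B" by (auto simp: effects_step_def)
      with 2 sandwich_span show ?thesis by (metis span_mono subsetD)
    next
      case (3 g X)
      have "sandwich (M g) ` B \<subseteq> effects_step U M k A B" using 3 by (auto simp: effects_step_def)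
      with 3 sandwich_span show ?thesis by (metis span_mono subsetD)
    qed
  qed
  then show "span (effects_step U M k (span A) (span B)) \<subseteq> span (effects_step U M k A B)"
    by (simp add: span_minimal)
qed

lemma span_effects_step_cong:
  assumes "span A = span A'" "k \<noteq> 0 \<Longrightarrow> span B = span B'"
  shows "span (effects_step U M k A B) = span (effects_step U M k A' B')"
proof -
  have "effects_step U M k (span A) (span B) = effects_step U M k (span A') (span B')"
    using assms by (simp add: effects_step_def)
  then show ?thesis by (metis span_effects_step_span)
qed

subsection \<open>Real dimension of spans of Hermitian matrices\<close>

lemma subspace_hermitian: "subspace {X::'n::finite op. cadj X = X}"
  unfolding subspace_def cadj_def by (simp add: vec_eq_iff)

lemma span_effects_hermitian: "span (effects U M k m) \<subseteq> {X. cadj X = X}"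
  by (rule span_minimal[OF _ subspace_hermitian]) (auto simp: effects_def effect_hermitian)

text \<open>A real-linear map into \<open>\<real>\<^sup>n\<^sup>\<times>\<^sup>n\<close> that is injective on Hermitian matrices: the entry
  \<open>(j,i)\<close> of a Hermitian matrix supplies \<open>Re X\<^sub>i\<^sub>j - Im X\<^sub>i\<^sub>j\<close>. It gives the bound \<open>n\<^sup>2\<close>
  (rather than \<open>2n\<^sup>2\<close>) on the dimensions below.\<close>
definition herm_coords :: "'n::finite op \<Rightarrow> real^'n^'n"
  where "herm_coords X = (\<chi> i j. Re (X$i$j) + Im (X$i$j))"

definition herm_dim :: "'n::finite op set \<Rightarrow> nat"
  where "herm_dim W = dim (herm_coords ` W)"

lemma linear_herm_coords: "linear herm_coords"
  by (rule linearI) (simp_all add: herm_coords_def vec_eq_iff distrib_left)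

lemma herm_coords_inj:
  assumes "cadj X = X" "cadj Y = Y" "herm_coords X = herm_coords Y"
  shows "X = (Y::'n::finite op)"
proof -
  have herm: "Z$j$i = cnj (Z$i$j)" if "cadj Z = Z" for Z :: "'n op" and i j
    using arg_cong[OF that, of "\<lambda>A. A$j$i"] by (simp add: cadj_def)
  have coords: "Re (X$i$j) + Im (X$i$j) = Re (Y$i$j) + Im (Y$i$j)" for i j
    using arg_cong[OF assms(3), of "\<lambda>A. A$i$j"] by (simp add: herm_coords_def)
  have "Re (X$i$j) - Im (X$i$j) = Re (Y$i$j) - Im (Y$i$j)" for i j
    using coords[of j i] unfolding herm[OF assms(1), of j i] herm[OF assms(2), of j i] by simp
  with coords have "Re (X$i$j) = Re (Y$i$j) \<and> Im (X$i$j) = Im (Y$i$j)" for i j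
    by (smt (verit))
  then show ?thesis by (simp add: vec_eq_iff complex_eq_iff)
qed

lemma herm_dim_le: "herm_dim (W :: 'n::finite op set) \<le> CARD('n) * CARD('n)"
  using dim_subset_UNIV[of "herm_coords ` W"] by (simp add: herm_dim_def)

lemma herm_dim_mono: "W \<subseteq> W' \<Longrightarrow> herm_dim W \<le> herm_dim W'"
  unfolding herm_dim_def by (intro dim_subset image_mono)

lemma herm_dim_span_strict_mono:
  fixes S T :: "'n::finite op set"
  assumes "span S \<subset> span T" "span T \<subseteq> {X. cadj X = X}"
  shows "herm_dim (span S) < herm_dim (span T)"
proof -
  have "herm_coords ` span S \<noteq> herm_coords ` span T"
  proof
    assume eq: "herm_coords ` span S = herm_coords ` span T"
    obtain x where x: "x \<in> span T" "x \<notin> span S" using assms(1) by auto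
    then obtain y where "y \<in> span S" "herm_coords y = herm_coords x" using eq by (metis imageE imageI)
    with x assms herm_coords_inj[of y x] show False by auto
  qed
  moreover have "herm_coords ` span S \<subseteq> herm_coords ` span T"
    using assms(1) by auto
  moreover have closed: "span (herm_coords ` span X) = herm_coords ` span X" for X :: "'n op set"
    by (metis span_linear_image[OF linear_herm_coords] span_span)
  ultimately have "span (herm_coords ` span S) \<subset> span (herm_coords ` span T)"
    unfolding closed by blast
  then show ?thesis unfolding herm_dim_def by (rule dim_psubset)
qed

lemma herm_dim_span_effects_pos: "1 \<le> herm_dim (span (effects U M k m :: 'n::finite op set))"
proof -
  have "(herm_coords (mat 1 :: 'n op)) $ i $ i = 1" for i
    by (simp add: herm_coords_def mat_def)
  then have "herm_coords (mat 1 :: 'n op) \<noteq> 0" by (metis zero_index zero_neq_one)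
  then have "herm_dim {mat 1 :: 'n op} = 1" by (simp add: herm_dim_def)
  moreover have "herm_dim {mat 1 :: 'n op} \<le> herm_dim (span (effects U M k m))"
    by (rule herm_dim_mono) (simp add: mat_1_in_effects span_base)
  ultimately show ?thesis by simp
qed

subsection \<open>Stabilisation of the spans of effects\<close>

lemma constant_from_step:
  assumes step: "\<And>l. t \<le> l \<Longrightarrow> W l = W (Suc l) \<Longrightarrow> W (Suc l) = W (Suc (Suc l))"
    and "t \<le> l" "W l = W (Suc l)" "l \<le> m"
  shows "W m = W l"
proof -
  have next_eq: "W (l + i) = W (Suc (l + i))" for i
    by (induction i) (use assms in auto)
  have "W (l + i) = W l" for i
    by (induction i) (use next_eq in auto)
  then show ?thesis by (metis le_add_diff_inverse \<open>l \<le> m\<close>)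
qed

text \<open>Before \<open>W\<close> becomes constant, \<open>d\<close> grows by at least one per step, so the invariant
  \<open>l + 1 \<le> d l\<close> persists from \<open>t\<close> on.\<close>
lemma bounded_chain_stabilises:
  fixes W :: "nat \<Rightarrow> 'a" and d :: "nat \<Rightarrow> nat"
  assumes strict: "\<And>l. W l \<noteq> W (Suc l) \<Longrightarrow> d l < d (Suc l)"
    and bound: "\<And>l. d l \<le> D"
    and step: "\<And>l. t \<le> l \<Longrightarrow> W l = W (Suc l) \<Longrightarrow> W (Suc l) = W (Suc (Suc l))"
    and base: "t + 1 \<le> d t"
  shows "\<exists>\<tau>. (\<forall>m\<ge>\<tau>. W m = W \<tau>) \<and> \<tau> + 1 \<le> d \<tau>"
proof -
  have "(\<exists>\<tau>. (\<forall>m\<ge>\<tau>. W m = W \<tau>) \<and> \<tau> + 1 \<le> d \<tau>) \<or> t + i + 1 \<le> d (t + i)" for i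
  proof (induction i)
    case 0
    then show ?case using base by simp
  next
    case (Suc i)
    show ?case
    proof (cases "W (t + i) = W (Suc (t + i))")
      case True
      then have "\<forall>m\<ge>t + i. W m = W (t + i)"
        using constant_from_step[of t W "t + i"] step le_add1 by blast
      then show ?thesis using Suc.IH by blast
    next
      case False
      then show ?thesis using Suc.IH strict[OF False] by auto
    qed
  qed
  from this[of D] bound[of "t + D"] show ?thesis by auto
qed

lemma span_effects_stabilise_step:
  fixes U :: "'i \<Rightarrow> 'n::finite op"
  assumes lower: "\<And>m. t \<le> m \<Longrightarrow> k \<noteq> 0 \<Longrightarrow> span (effects U M (k - 1) m) = span (effects U M (k - 1) t)"
    and base: "t + 1 \<le> herm_dim (span (effects U M k t))"
  shows "\<exists>\<tau>. (\<forall>m\<ge>\<tau>. span (effects U M k m) = span (effects U M k \<tau>))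
    \<and> \<tau> + 1 \<le> herm_dim (span (effects U M k \<tau>))"
proof (rule bounded_chain_stabilises[where W = "\<lambda>l. span (effects U M k l)"
    and d = "\<lambda>l. herm_dim (span (effects U M k l))" and D = "CARD('n) * CARD('n)" and t = t])
  fix l
  assume "span (effects U M k l) \<noteq> span (effects U M k (Suc l))"
  moreover have "span (effects U M k l) \<subseteq> span (effects U M k (Suc l))"
    by (intro span_mono effects_mono) simp_all
  ultimately show "herm_dim (span (effects U M k l)) < herm_dim (span (effects U M k (Suc l)))"
    by (intro herm_dim_span_strict_mono span_effects_hermitian) auto
next
  show "herm_dim (span (effects U M k l)) \<le> CARD('n) * CARD('n)" for l
    by (rule herm_dim_le)
next
  fix l
  assume "t \<le> l" and eq: "span (effects U M k l) = span (effects U M k (Suc l))"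
  have "span (effects U M k (Suc (Suc l)))
      = span (effects_step U M k (effects U M k (Suc l)) (effects U M (k - 1) (Suc l)))"
    by (simp only: effects_Suc)
  also have "\<dots> = span (effects_step U M k (effects U M k l) (effects U M (k - 1) l))"
    using eq lower[of "Suc l"] lower[of l] \<open>t \<le> l\<close> by (intro span_effects_step_cong) simp_all
  also have "\<dots> = span (effects U M k (Suc l))"
    by (simp only: effects_Suc)
  finally show "span (effects U M k (Suc l)) = span (effects U M k (Suc (Suc l)))"
    by simp
qed (use base in simp)

lemma span_effects_stabilise:
  fixes U :: "'i \<Rightarrow> 'n::finite op"
  shows "\<exists>\<tau>. (\<forall>m\<ge>\<tau>. span (effects U M k m) = span (effects U M k \<tau>))
    \<and> \<tau> + 1 \<le> herm_dim (span (effects U M k \<tau>))"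
proof (induction k)
  case 0
  show ?case
    using herm_dim_span_effects_pos[of U M 0 0] by (intro span_effects_stabilise_step[where t = 0]) simp_all
next
  case (Suc k)
  then obtain \<tau> where \<tau>: "\<forall>m\<ge>\<tau>. span (effects U M k m) = span (effects U M k \<tau>)"
    "\<tau> + 1 \<le> herm_dim (span (effects U M k \<tau>))" by blast
  have "herm_dim (span (effects U M k \<tau>)) \<le> herm_dim (span (effects U M (Suc k) \<tau>))"
    by (intro herm_dim_mono span_mono effects_mono) simp_all
  show ?case
  proof (rule span_effects_stabilise_step[where t = \<tau>])
    show "span (effects U M (Suc k - 1) m) = span (effects U M (Suc k - 1) \<tau>)" if "\<tau> \<le> m" for m
      unfolding diff_Suc_1 using \<tau>(1) that by blast
    show "\<tau> + 1 \<le> herm_dim (span (effects U M (Suc k) \<tau>))"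
      using \<tau>(2) \<open>herm_dim _ \<le> _\<close> by linarith
  qed
qed

lemma effects_subset_span_effects:
  fixes U :: "'i \<Rightarrow> 'n::finite op"
  shows "effects U M k m \<subseteq> span (effects U M k (CARD('n)^2 - 1))"
proof -
  obtain \<tau> where \<tau>: "\<forall>m\<ge>\<tau>. span (effects U M k m) = span (effects U M k \<tau>)"
    "\<tau> + 1 \<le> herm_dim (span (effects U M k \<tau>))"
    using span_effects_stabilise by blast
  have "\<tau> \<le> CARD('n)^2 - 1"
    using \<tau>(2) herm_dim_le[of "span (effects U M k \<tau>)"] by (simp add: power2_eq_square)
  show ?thesis
  proof (cases "m \<le> CARD('n)^2 - 1")
    case True
    then show ?thesis using effects_mono[of k k m] span_superset by blast
  next
    case False
    then have "span (effects U M k m) = span (effects U M k (CARD('n)^2 - 1))"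
      using \<tau>(1) \<open>\<tau> \<le> _\<close> by (metis nat_le_linear order_trans)
    then show ?thesis using span_superset by blast
  qed
qed

subsection \<open>Equivalence of states in terms of effects\<close>

definition trace_agree :: "'n::finite op \<Rightarrow> 'n op \<Rightarrow> 'n op set"
  where "trace_agree \<rho>s \<rho>t = {E. mtrace (E ** \<rho>s) = mtrace (E ** \<rho>t)}"

lemma Prob_eq_mtrace_effect: "Prob U M \<rho> b a S = mtrace (effect U M a S b ** \<rho>)"
proof -
  let ?V = "Vmap U M a S b"
  have "Prob U M \<rho> b a S = mtrace ((?V ** \<rho>) ** cadj ?V)" by (simp add: Prob_def)
  also have "\<dots> = mtrace (cadj ?V ** (?V ** \<rho>))" by (rule mtrace_mult_commute)
  finally show ?thesis by (simp add: effect_def matrix_mul_assoc)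
qed

lemma subspace_trace_agree: "subspace (trace_agree \<rho>s (\<rho>t :: 'n::finite op))"
proof -
  have "mtrace ((X + Y) ** \<rho>) = mtrace (X ** \<rho>) + mtrace (Y ** \<rho>)" for X Y \<rho> :: "'n op"
    by (simp add: mtrace_def matrix_matrix_mult_def distrib_right sum.distrib)
  moreover have "mtrace ((r *\<^sub>R X) ** \<rho>) = r *\<^sub>R mtrace (X ** \<rho>)" for r and X \<rho> :: "'n op"
    by (simp add: matrix_mult_scaleR_left mtrace_def scaleR_sum_right)
  moreover have "mtrace (0 ** \<rho>) = 0" for \<rho> :: "'n op"
    by (simp add: mtrace_def)
  ultimately show ?thesis unfolding subspace_def trace_agree_def by simp
qed

lemma effects_subset_trace_agree:
  fixes U :: "'i \<Rightarrow> 'n::finite op"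
  assumes "effects U M k (CARD('n)^2 - 1) \<subseteq> trace_agree \<rho>s \<rho>t"
  shows "effects U M k m \<subseteq> trace_agree \<rho>s \<rho>t"
  using effects_subset_span_effects[of U M k m] span_minimal[OF assms subspace_trace_agree] by blast

lemma equiv_on_iff_effects:
  "equiv_on U M P \<rho>s \<rho>t \<longleftrightarrow> (\<forall>a S b. scheduler a S \<longrightarrow> length b = length S \<longrightarrow> P a S
     \<longrightarrow> effect U M a S b \<in> trace_agree \<rho>s \<rho>t)"
  by (simp add: equiv_on_def Prob_eq_mtrace_effect trace_agree_def)

lemma qequiv_iff_effects: "qequiv U M \<rho>s \<rho>t \<longleftrightarrow> (\<forall>k m. effects U M k m \<subseteq> trace_agree \<rho>s \<rho>t)"
  unfolding qequiv_def equiv_on_iff_effects effects_def by fastforce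

lemma qequiv_k_iff_effects: "qequiv_k U M k \<rho>s \<rho>t \<longleftrightarrow> (\<forall>m. effects U M k m \<subseteq> trace_agree \<rho>s \<rho>t)"
  unfolding qequiv_k_def equiv_on_iff_effects effects_def by fastforce

lemma qequiv_m_iff_effects: "qequiv_m U M m \<rho>s \<rho>t \<longleftrightarrow> effects U M m m \<subseteq> trace_agree \<rho>s \<rho>t"
  unfolding qequiv_m_def equiv_on_iff_effects effects_def by fastforce

lemma qequiv_mk_iff_effects: "qequiv_mk U M m k \<rho>s \<rho>t \<longleftrightarrow> effects U M k m \<subseteq> trace_agree \<rho>s \<rho>t"
  unfolding qequiv_mk_def equiv_on_iff_effects effects_def by fastforce

theorem theorem1:
  fixes U :: "'i::finite \<Rightarrow> complex^'n::finite^'n"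
    and M :: "'o::finite \<Rightarrow> complex^'n^'n"
    and \<rho>s \<rho>t :: "complex^'n^'n"
  assumes "qmm U M" and "density_op \<rho>s" and "density_op \<rho>t"
  defines "n \<equiv> CARD('n)"
  shows "(qequiv U M \<rho>s \<rho>t \<longleftrightarrow> qequiv_m U M (n^2 - 1) \<rho>s \<rho>t)
       \<and> (qequiv_m U M (n^2 - 1) \<rho>s \<rho>t \<longleftrightarrow> qequiv_k U M (n^2 - 1) \<rho>s \<rho>t)
       \<and> (\<forall>k::nat. qequiv_k U M k \<rho>s \<rho>t \<longleftrightarrow> qequiv_mk U M (n^2 - 1) k \<rho>s \<rho>t)"
proof -
  let ?N = "n^2 - 1" and ?K = "trace_agree \<rho>s \<rho>t"
  have stable: "effects U M k m \<subseteq> ?K" if "effects U M k ?N \<subseteq> ?K" for k m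
    using effects_subset_trace_agree[of U M k \<rho>s \<rho>t m] that unfolding n_def by blast
  have m_imp_all: "qequiv U M \<rho>s \<rho>t" if "qequiv_m U M ?N \<rho>s \<rho>t"
  proof -
    have "effects U M k ?N \<subseteq> ?K" for k
      using that effects_subset_effects_diag[of U M k ?N] by (auto simp: qequiv_m_iff_effects)
    then show ?thesis unfolding qequiv_iff_effects using stable by blast
  qed
  have all_imp_k: "qequiv_k U M k \<rho>s \<rho>t" if "qequiv U M \<rho>s \<rho>t" for k
    using that by (simp add: qequiv_iff_effects qequiv_k_iff_effects)
  have all_imp_m: "qequiv_m U M ?N \<rho>s \<rho>t" if "qequiv U M \<rho>s \<rho>t"
    using that by (simp add: qequiv_iff_effects qequiv_m_iff_effects)
  have k_imp_m: "qequiv_m U M ?N \<rho>s \<rho>t" if "qequiv_k U M ?N \<rho>s \<rho>t"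
    using that by (simp add: qequiv_k_iff_effects qequiv_m_iff_effects)
  have "qequiv_k U M k \<rho>s \<rho>t \<longleftrightarrow> qequiv_mk U M ?N k \<rho>s \<rho>t" for k
    unfolding qequiv_k_iff_effects qequiv_mk_iff_effects using stable by blast
  then show ?thesis
    using m_imp_all all_imp_k all_imp_m k_imp_m by blast
qed

end
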